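(* In the setting of the context, with step sizes $\alpha_k=\frac{a}{b+k}$ where $a>0$, $b>1$ and $\frac ab\le\frac1{2M\tilde L}$, for every $n\ge0$ and $0\le k\le n$, $$B_k\le\frac{a^2M\tilde Lc(A)\sigma_{\max}^2}{b+k-1}\Big(\frac{b+k+1}{b+n+1}\Big)^{a\sigma_{\min}^2}.$$
   Context: Standing setting: $M\ge N$, $A\in\mathbb{R}^{M\times N}$ of full column rank with rows $a_1,\dots,a_M$; singular values $\sigma_1\ge\dots\ge\sigma_N>0$, $\sigma_{\max}=\sigma_1$, $\sigma_{\min}=\sigma_N$, $c(A)=\sigma_{\max}^2/\sigma_{\min}^2$, $\tilde L=\max_i\|a_i\|^2$. Fix $\ell\in\{1,\dots,N\}$. For $\alpha>0$ put $A(\alpha)=1-2\alpha\sigma_\ell^2$, $B(\alpha)=\alpha^2M\tilde Lc(A)\sigma_{\max}^2$, $p(\alpha)=1-\alpha\sigma_{\min}^2$. For fixed $n$ and $0\le k\le n$: $B_k=\sum_{j=k}^n\Big(\prod_{i=j+1}^nA(\alpha_i)\Big)B(\alpha_j)\Big(\prod_{i=k}^{j-1}p(\alpha_i)\Big)$ (empty products equal $1$). (The scalars $a,b$ in the step size are unrelated to the rows $a_i$.) *)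

theory Defs
  imports Complex_Main "Jordan_Normal_Form.Matrix"
begin

definition is_singular_values :: "real mat \<Rightarrow> nat \<Rightarrow> nat \<Rightarrow> (nat \<Rightarrow> real) \<Rightarrow> bool" where
  "is_singular_values A M N sig \<longleftrightarrow>
     (\<forall>i j. 1 \<le> i \<longrightarrow> i \<le> j \<longrightarrow> j \<le> N \<longrightarrow> sig j \<le> sig i) \<and>
     (\<forall>i. 1 \<le> i \<longrightarrow> i \<le> N \<longrightarrow> 0 \<le> sig i) \<and>
     (\<exists>U V. U \<in> carrier_mat M M \<and> V \<in> carrier_mat N N \<and>
        transpose_mat U * U = 1\<^sub>m M \<and> transpose_mat V * V = 1\<^sub>m N \<and>
        A = U * mat M N (\<lambda>(i, j). if i = j then sig (i + 1) else 0) * transpose_mat V)"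

definition full_column_rank :: "real mat \<Rightarrow> bool" where
  "full_column_rank A \<longleftrightarrow>
     (\<forall>x \<in> carrier_vec (dim_col A). A *\<^sub>v x = 0\<^sub>v (dim_row A) \<longrightarrow> x = 0\<^sub>v (dim_col A))"

definition max_row_sq :: "real mat \<Rightarrow> real" where
  "max_row_sq A = Max ((\<lambda>i. row A i \<bullet> row A i) ` {0..<dim_row A})"

definition Bsum :: "(nat \<Rightarrow> real) \<Rightarrow> (real \<Rightarrow> real) \<Rightarrow> (real \<Rightarrow> real) \<Rightarrow> (real \<Rightarrow> real)
                     \<Rightarrow> nat \<Rightarrow> nat \<Rightarrow> real" where
  "Bsum \<alpha> Af Bf pf n k =
     (\<Sum>j=k..n. (\<Prod>i=j+1..n. Af (\<alpha> i)) * Bf (\<alpha> j) * (\<Prod>i=k..<j. pf (\<alpha> i)))"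

end

theory Submission
  imports Defs "HOL-Analysis.Convex"
begin

(* Since smax^2 <= M L (Cauchy-Schwarz on the rows of A), the step sizes satisfy
   2 alpha_i sigma_l^2 <= 1, so 0 <= A(alpha_i) <= p(alpha_i) = 1 - alpha_i smin^2, and the two
   products in the j-th term are at most exp (- smin^2 * (sum of alpha_i over k <= i <= n, i ~= j)).
   For alpha_i = a / (b + i) this sum is still at least a ln ((b+n+1) / (b+k+1)), so every term is
   at most alpha_j^2 ((b+k+1) / (b+n+1)) powr (a smin^2), uniformly in j; finally
   sum_{j >= k} 1 / (b+j)^2 <= 1 / (b+k-1) by telescoping. *)

lemma ln_diff_le_sum_inverse:
  fixes b :: real
  assumes b: "b > 0" and kj: "k \<le> j"
  shows "ln (b + real j) - ln (b + real k) \<le> (\<Sum>i=k..<j. 1 / (b + real i))"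
  using kj
proof (induction j rule: dec_induct)
  case (step j)
  have "ln (b + real (Suc j)) - ln (b + real j) = ln ((b + real j + 1) / (b + real j))"
    using b by (simp add: ln_div add.assoc)
  also have "\<dots> \<le> (b + real j + 1) / (b + real j) - 1"
    using b by (intro ln_le_minus_one) auto
  also have "\<dots> = 1 / (b + real j)"
    using b by (simp add: field_simps)
  finally show ?case
    using step by simp
qed simp

lemma sum_inverse_square_le:
  fixes b :: real
  assumes b: "b > 1" and kn: "k \<le> n"
  shows "(\<Sum>j=k..n. 1 / (b + real j)\<^sup>2) \<le> 1 / (b + real k - 1) - 1 / (b + real n)"
  using kn
proof (induction n rule: dec_induct)
  case base
  have "1 / (b + real k)\<^sup>2 \<le> 1 / ((b + real k - 1) * (b + real k))"
    using b by (intro divide_left_mono) (auto simp: power2_eq_square)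
  also have "\<dots> = 1 / (b + real k - 1) - 1 / (b + real k)"
    using b by (simp add: field_simps)
  finally show ?case by simp
next
  case (step n)
  have "1 / (b + real (Suc n))\<^sup>2 \<le> 1 / ((b + real n) * (b + real (Suc n)))"
    using b by (intro divide_left_mono) (auto simp: power2_eq_square)
  also have "\<dots> = 1 / (b + real n) - 1 / (b + real (Suc n))"
    using b by (simp add: field_simps)
  finally show ?case
    using step by (simp add: sum.cl_ivl_Suc)
qed

lemma prod_one_minus_le_exp_neg_sum:
  fixes x :: "'a \<Rightarrow> real"
  assumes "\<And>i. i \<in> I \<Longrightarrow> x i \<le> 1"
  shows "(\<Prod>i\<in>I. 1 - x i) \<le> exp (- (\<Sum>i\<in>I. x i))"
proof -
  have "(\<Prod>i\<in>I. 1 - x i) \<le> (\<Prod>i\<in>I. exp (- x i))"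
    using assms by (intro prod_mono) (auto simp: exp_ge_add_one_self[of "- x _", simplified])
  also have "\<dots> = exp (- (\<Sum>i\<in>I. x i))"
    by (cases "finite I") (simp_all add: exp_sum[symmetric] sum_negf)
  finally show ?thesis .
qed

lemma harmonic_steps_prod_le_powr:
  fixes a b m :: real and k j n :: nat
  assumes a: "a \<ge> 0" and b: "b > 0" and m: "m \<ge> 0" and am: "a * m \<le> b"
    and kj: "k \<le> j" and jn: "j \<le> n"
  shows "(\<Prod>i=j+1..n. 1 - a / (b + real i) * m) * (\<Prod>i=k..<j. 1 - a / (b + real i) * m)
         \<le> ((b + real k + 1) / (b + real n + 1)) powr (a * m)"
proof -
  define x where "x i = a / (b + real i) * m" for i
  define h where "h I = (\<Sum>i\<in>I. 1 / (b + real i))" for I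
  have x_le_1: "x i \<le> 1" for i
  proof -
    have "x i = a * m / (b + real i)" unfolding x_def by simp
    also have "\<dots> \<le> a * m / b" using a m b by (intro divide_left_mono) auto
    also have "\<dots> \<le> 1" using am b by simp
    finally show ?thesis .
  qed
  have prod_le: "(\<Prod>i\<in>I. 1 - x i) \<le> exp (- (a * m * h I))" for I
  proof -
    have "(\<Sum>i\<in>I. x i) = a * m * h I"
      unfolding x_def h_def sum_distrib_left by (rule sum.cong) auto
    then show ?thesis
      using prod_one_minus_le_exp_neg_sum[of I x] x_le_1 by simp
  qed
  (* The index j missing from both sums is paid for by shifting b to b + 1 in the logarithms. *)
  have "ln (b + 1 + real n) - ln (b + 1 + real j) \<le> (\<Sum>i=j..<n. 1 / (b + 1 + real i))"
    using b jn by (intro ln_diff_le_sum_inverse) auto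
  also have "\<dots> = (\<Sum>i=Suc j..<Suc n. 1 / (b + real i))"
    unfolding sum.shift_bounds_Suc_ivl by (simp add: add.commute add.left_commute)
  also have "\<dots> = h {j+1..n}"
    unfolding h_def by (simp add: atLeastLessThanSuc_atLeastAtMost)
  finally have upper: "ln (b + 1 + real n) - ln (b + 1 + real j) \<le> h {j+1..n}" .
  have "ln (b + 1 + real j) - ln (b + 1 + real k) \<le> (\<Sum>i=k..<j. 1 / (b + 1 + real i))"
    using b kj by (intro ln_diff_le_sum_inverse) auto
  also have "\<dots> \<le> h {k..<j}"
    unfolding h_def using b by (intro sum_mono divide_left_mono) auto
  finally have lower: "ln (b + 1 + real j) - ln (b + 1 + real k) \<le> h {k..<j}" .
  have "(\<Prod>i=j+1..n. 1 - x i) * (\<Prod>i=k..<j. 1 - x i)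
      \<le> exp (- (a * m * h {j+1..n})) * exp (- (a * m * h {k..<j}))"
    using x_le_1 by (intro mult_mono prod_le prod_nonneg) auto
  also have "\<dots> = exp (- (a * m) * (h {j+1..n} + h {k..<j}))"
    by (simp add: exp_add[symmetric] algebra_simps)
  also have "\<dots> \<le> exp (- (a * m) * (ln (b + 1 + real n) - ln (b + 1 + real k)))"
    using upper lower a m by (intro exp_mono mult_left_mono_neg) auto
  also have "\<dots> = ((b + real k + 1) / (b + real n + 1)) powr (a * m)"
    using b by (simp add: powr_def ln_div algebra_simps)
  finally show ?thesis
    unfolding x_def .
qed

lemma Bsum_harmonic_steps_le:
  fixes a b m s C :: real and n k :: nat
  assumes a: "a > 0" and b: "b > 1" and m: "0 \<le> m" "m \<le> s"
    and step: "2 * (a / b) * s \<le> 1" and C: "C \<ge> 0" and kn: "k \<le> n"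
  shows "Bsum (\<lambda>i. a / (b + real i)) (\<lambda>x. 1 - 2 * x * s) (\<lambda>x. x\<^sup>2 * C) (\<lambda>x. 1 - x * m) n k
         \<le> a\<^sup>2 * C / (b + real k - 1) * ((b + real k + 1) / (b + real n + 1)) powr (a * m)"
proof -
  define x where "x i = a / (b + real i)" for i
  define P where "P = ((b + real k + 1) / (b + real n + 1)) powr (a * m)"
  have x_pos: "x i > 0" for i
    unfolding x_def using a b by simp
  have Af_le_pf: "0 \<le> 1 - 2 * x i * s \<and> 1 - 2 * x i * s \<le> 1 - x i * m" for i
  proof -
    have "2 * x i * s \<le> 2 * (a / b) * s"
      unfolding x_def using a b m by (intro mult_right_mono mult_left_mono divide_left_mono) auto
    moreover have "x i * m \<le> x i * s"
      using x_pos[of i] m by (intro mult_left_mono) auto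
    ultimately show ?thesis
      using step x_pos[of i] m by auto
  qed
  have pf_nonneg: "0 \<le> 1 - x i * m" for i
    using Af_le_pf[of i] by linarith
  have "a * m \<le> b"
  proof -
    have "a * m \<le> 2 * a * s"
      using a m by (simp add: mult_left_mono)
    then show ?thesis
      using step b by (simp add: field_simps)
  qed
  have term_le: "(\<Prod>i=j+1..n. 1 - 2 * x i * s) * ((x j)\<^sup>2 * C) * (\<Prod>i=k..<j. 1 - x i * m)
      \<le> (x j)\<^sup>2 * C * P" if "j \<in> {k..n}" for j
  proof -
    have "(\<Prod>i=j+1..n. 1 - 2 * x i * s) * (\<Prod>i=k..<j. 1 - x i * m)
        \<le> (\<Prod>i=j+1..n. 1 - x i * m) * (\<Prod>i=k..<j. 1 - x i * m)"
      using Af_le_pf pf_nonneg by (intro mult_right_mono prod_mono prod_nonneg) auto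
    also have "\<dots> \<le> P"
      unfolding x_def P_def using a b m \<open>a * m \<le> b\<close> that
      by (intro harmonic_steps_prod_le_powr) auto
    finally have "(x j)\<^sup>2 * C * ((\<Prod>i=j+1..n. 1 - 2 * x i * s) * (\<Prod>i=k..<j. 1 - x i * m))
        \<le> (x j)\<^sup>2 * C * P"
      using C by (intro mult_left_mono) auto
    then show ?thesis
      by (simp only: ac_simps)
  qed
  have "Bsum x (\<lambda>x. 1 - 2 * x * s) (\<lambda>x. x\<^sup>2 * C) (\<lambda>x. 1 - x * m) n k
      \<le> (\<Sum>j=k..n. (x j)\<^sup>2 * C * P)"
    unfolding Bsum_def by (intro sum_mono term_le)
  also have "\<dots> = a\<^sup>2 * C * P * (\<Sum>j=k..n. 1 / (b + real j)\<^sup>2)"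
    by (simp add: x_def sum_distrib_left power_divide)
  also have "\<dots> \<le> a\<^sup>2 * C * P * (1 / (b + real k - 1))"
  proof -
    have "0 \<le> 1 / (b + real n)"
      using b by simp
    then have "(\<Sum>j=k..n. 1 / (b + real j)\<^sup>2) \<le> 1 / (b + real k - 1)"
      using sum_inverse_square_le[OF b kn] by linarith
    then show ?thesis
      using C by (intro mult_left_mono) (auto simp: P_def)
  qed
  finally show ?thesis
    unfolding x_def P_def by simp
qed


lemma mult_mat_vec_inner_le_max_row_sq:
  assumes A: "A \<in> carrier_mat M N" and e: "e \<in> carrier_vec N"
  shows "(A *\<^sub>v e) \<bullet> (A *\<^sub>v e) \<le> real M * max_row_sq A * (e \<bullet> e)"
proof -
  have "(A *\<^sub>v e) \<bullet> (A *\<^sub>v e) = (\<Sum>i\<in>{0..<M}. (row A i \<bullet> e)\<^sup>2)"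
    using A by (simp add: scalar_prod_def power2_eq_square)
  also have "\<dots> \<le> (\<Sum>i\<in>{0..<M}. max_row_sq A * (e \<bullet> e))"
  proof (rule sum_mono)
    fix i assume i: "i \<in> {0..<M}"
    have "(row A i \<bullet> e)\<^sup>2 \<le> (row A i \<bullet> row A i) * (e \<bullet> e)"
      using Cauchy_Schwarz_ineq_sum[of "\<lambda>j. row A i $ j" "\<lambda>j. e $ j" "{0..<N}"] A e i
      by (simp add: scalar_prod_def power2_eq_square)
    also have "\<dots> \<le> max_row_sq A * (e \<bullet> e)"
      unfolding max_row_sq_def using A i e
      by (intro mult_right_mono Max_ge) (auto simp: scalar_prod_def intro!: sum_nonneg)
    finally show "(row A i \<bullet> e)\<^sup>2 \<le> max_row_sq A * (e \<bullet> e)" .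
  qed
  finally show ?thesis
    by simp
qed

lemma col_inner_self_orthogonal:
  assumes "U \<in> carrier_mat n n" "transpose_mat U * U = 1\<^sub>m n" "j < n"
  shows "col U j \<bullet> col U j = 1"
proof -
  have "(transpose_mat U * U) $$ (j, j) = col U j \<bullet> col U j"
    using assms(1,3) by simp
  then show ?thesis
    unfolding assms(2) using assms(3) by simp
qed

lemma largest_singular_value_sq_le:
  assumes A: "A \<in> carrier_mat M N" and sv: "is_singular_values A M N \<sigma>"
    and N: "0 < N" "N \<le> M"
  shows "(\<sigma> 1)\<^sup>2 \<le> real M * max_row_sq A"
proof -
  define S :: "real mat" where "S = mat M N (\<lambda>(i, j). if i = j then \<sigma> (i + 1) else 0)"
  obtain U V where U: "U \<in> carrier_mat M M" and V: "V \<in> carrier_mat N N"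
    and UU: "transpose_mat U * U = 1\<^sub>m M" and VV: "transpose_mat V * V = 1\<^sub>m N"
    and A_eq: "A = U * S * transpose_mat V"
    using sv unfolding is_singular_values_def S_def by blast
  have S: "S \<in> carrier_mat M N"
    unfolding S_def by simp
  have M: "0 < M"
    using N by simp
  have "A * V = U * S * (transpose_mat V * V)"
    unfolding A_eq using U S V by (intro assoc_mult_mat) auto
  also have "\<dots> = U * S"
    unfolding VV using U S by simp
  finally have AV: "A * V = U * S" .
  have col_S: "col S 0 = \<sigma> 1 \<cdot>\<^sub>v unit_vec M 0"
    by (rule eq_vecI) (use M N in \<open>auto simp: S_def\<close>)
  have U_unit: "U *\<^sub>v unit_vec M 0 = col U 0"
    by (rule eq_vecI) (use U M in auto)
  have "A *\<^sub>v col V 0 = col (A * V) 0"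
    by (rule col_mult2[OF A V \<open>0 < N\<close>, symmetric])
  also have "\<dots> = U *\<^sub>v col S 0"
    unfolding AV by (rule col_mult2[OF U S \<open>0 < N\<close>])
  also have "\<dots> = \<sigma> 1 \<cdot>\<^sub>v col U 0"
    unfolding col_S using mult_mat_vec[OF U, of "unit_vec M 0" "\<sigma> 1"] U_unit by simp
  finally have A_v: "A *\<^sub>v col V 0 = \<sigma> 1 \<cdot>\<^sub>v col U 0" .
  have u: "col U 0 \<bullet> col U 0 = 1" and v: "col V 0 \<bullet> col V 0 = 1"
    using col_inner_self_orthogonal[OF U UU M] col_inner_self_orthogonal[OF V VV \<open>0 < N\<close>] .
  have "(\<sigma> 1)\<^sup>2 = (A *\<^sub>v col V 0) \<bullet> (A *\<^sub>v col V 0)"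
    unfolding A_v using U u by (simp add: power2_eq_square)
  also have "\<dots> \<le> real M * max_row_sq A"
    using mult_mat_vec_inner_le_max_row_sq[OF A col_carrier_vec[OF \<open>0 < N\<close> V]] v by simp
  finally show ?thesis .
qed

theorem lemma15:
  fixes A :: "real mat" and M N l :: nat and \<sigma> :: "nat \<Rightarrow> real"
    and a b :: real and n k :: nat
  assumes dims: "A \<in> carrier_mat M N" and MN: "N \<le> M"
    and rank: "full_column_rank A"
    and sv: "is_singular_values A M N \<sigma>"
    and ell: "1 \<le> l" "l \<le> N"
    and a_pos: "a > 0" and b_gt: "b > 1"
    and ab: "a / b \<le> 1 / (2 * real M * max_row_sq A)"
    and kn: "k \<le> n"
  shows
    "let smax = \<sigma> 1; smin = \<sigma> N; L = max_row_sq A; c = smax\<^sup>2 / smin\<^sup>2;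
         Af = (\<lambda>\<alpha>. 1 - 2 * \<alpha> * (\<sigma> l)\<^sup>2);
         Bf = (\<lambda>\<alpha>. \<alpha>\<^sup>2 * real M * L * c * smax\<^sup>2);
         pf = (\<lambda>\<alpha>. 1 - \<alpha> * smin\<^sup>2);
         \<alpha> = (\<lambda>j. a / (b + real j))
     in Bsum \<alpha> Af Bf pf n k
        \<le> a\<^sup>2 * real M * L * c * smax\<^sup>2 / (b + real k - 1)
          * ((b + real k + 1) / (b + real n + 1)) powr (a * smin\<^sup>2)"
proof -
  define K where "K = real M * max_row_sq A"
  have \<sigma>_mono: "0 \<le> \<sigma> N" "\<sigma> N \<le> \<sigma> l" "\<sigma> l \<le> \<sigma> 1"
    using sv ell unfolding is_singular_values_def by auto
  have "(\<sigma> 1)\<^sup>2 \<le> K"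
    unfolding K_def using largest_singular_value_sq_le[OF dims sv _ MN] ell by simp
  then have \<sigma>_sq: "(\<sigma> N)\<^sup>2 \<le> (\<sigma> l)\<^sup>2" "(\<sigma> l)\<^sup>2 \<le> K"
    using \<sigma>_mono by (auto intro: power_mono order.trans)
  have "0 < a / b" "a / b \<le> 1 / (2 * K)"
    using a_pos b_gt ab by (simp_all add: K_def mult.assoc)
  then have "0 < K" and step: "2 * (a / b) * (\<sigma> l)\<^sup>2 \<le> 1"
    using \<sigma>_sq mult_mono[of "a / b" "1 / (2 * K)" "(\<sigma> l)\<^sup>2" K]
    by (auto simp: field_simps dest: order.strict_trans2)
  then have "0 \<le> K * ((\<sigma> 1)\<^sup>2 / (\<sigma> N)\<^sup>2) * (\<sigma> 1)\<^sup>2"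
    by simp
  from Bsum_harmonic_steps_le[OF a_pos b_gt zero_le_power2 \<sigma>_sq(1) step this kn]
  show ?thesis
    by (simp add: Let_def K_def mult.assoc)
qed

end
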